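(* Let $\mathcal{F}_s$ be as below and let $E_s$ be the number of forms $f\in\mathcal{F}_s$ such that $-3D(f)$ is imaginary or unusual with $\mathrm{sgn}(-3D(f))\in\{1,h\}$, the Hessian $H_f=(P,Q,R)$ is partially reduced, and $\deg(P)=\deg(R)$. Then $E_s\le\frac{q+1}{2}q^s$ if $s\equiv0\pmod 4$, and $E_s=0$ if $s\not\equiv0\pmod4$.
   Context: $q$ is a prime power with $\gcd(q,6)=1$; for nonzero $H\in\mathbb{F}_q[t]$, $|H|=q^{\deg H}$, $\mathrm{sgn}(H)$ = leading coefficient, $|0|=0$. A binary cubic form $(a,b,c,d)$ is $ax^3+bx^2y+cxy^2+dy^3$ over $\mathbb{F}_q[t]$, irreducible, with discriminant $D(f)=18abcd+b^2c^2-4ac^3-4b^3d-27a^2d^2$ and Hessian $(P,Q,R)$, $P=b^2-3ac$, $Q=bc-9ad$, $R=c^2-3bd$ (a binary quadratic form $Px^2+Qxy+Ry^2$ of discriminant $-3D(f)$). $\Delta$ is imaginary if $\deg\Delta$ odd and unusual if $\deg\Delta$ even and $\mathrm{sgn}(\Delta)$ a non-square in $\mathbb{F}_q^*$. Fix a primitive root $h$ of $\mathbb{F}_q^*$, $S=\{h^i:0\le i\le(q-3)/2\}$. A binary quadratic form $(A,B,C)$ is partially reduced if $|B|<|A|\le|C|$; if $|A|<|C|$ then $\mathrm{sgn}(A)\in\{1,h\}$, if $|A|=|C|$ then $\mathrm{sgn}(A)=1$; and $B\ne0$ implies $\mathrm{sgn}(B)\in S$. $\mathcal{F}_s$ is the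 set of binary cubic forms $f=(a,b,c,d)$ with $\deg D(f)=s$, $\deg a\le s/4$, $\deg b\le s/4$, $\deg(ad)\le s/2$, $\deg(bc)\le s/2$, and $\mathrm{sgn}(a)\in S$. *)

theory Defs
  imports "HOL-Computational_Algebra.Polynomial" "HOL-Computational_Algebra.Polynomial_Factorial" "HOL-Library.Cardinality"
begin

type_synonym 'a bcf = "'a poly \<times> 'a poly \<times> 'a poly \<times> 'a poly"

definition pabs :: "'a::{field,finite} poly \<Rightarrow> nat" where
  "pabs H = (if H = 0 then 0 else CARD('a) ^ degree H)"

definition psgn :: "'a::field poly \<Rightarrow> 'a" where
  "psgn H = lead_coeff H"

definition disc :: "'a::comm_ring_1 \<times> 'a \<times> 'a \<times> 'a \<Rightarrow> 'a" where
  "disc f = (case f of (a,b,c,d) \<Rightarrow>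
     18*a*b*c*d + b^2*c^2 - 4*a*c^3 - 4*b^3*d - 27*a^2*d^2)"

definition hessian :: "'a::comm_ring_1 \<times> 'a \<times> 'a \<times> 'a \<Rightarrow> 'a \<times> 'a \<times> 'a" where
  "hessian f = (case f of (a,b,c,d) \<Rightarrow> (b^2 - 3*a*c, b*c - 9*a*d, c^2 - 3*b*d))"

text \<open>A form with a = 0 is divisible by y, hence reducible; for a \<noteq> 0 the form is
  irreducible iff its dehomogenisation a x^3 + b x^2 + c x + d is irreducible in F_q(t)[x].\<close>
definition irred_form :: "'a::field bcf \<Rightarrow> bool" where
  "irred_form f = (case f of (a,b,c,d) \<Rightarrow>
     a \<noteq> 0 \<and> irreducible (map_poly to_fract [:d, c, b, a:]))"

definition is_square :: "'a::field \<Rightarrow> bool" where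
  "is_square x = (\<exists>y. y^2 = x)"

definition imaginary :: "'a::field poly \<Rightarrow> bool" where
  "imaginary \<Delta> = odd (degree \<Delta>)"

definition unusual :: "'a::field poly \<Rightarrow> bool" where
  "unusual \<Delta> = (even (degree \<Delta>) \<and> \<not> is_square (psgn \<Delta>))"

definition Sset :: "'a::{field,finite} \<Rightarrow> 'a set" where
  "Sset h = {h ^ i | i. i \<le> (CARD('a) - 3) div 2}"

definition partially_reduced :: "'a::{field,finite} \<Rightarrow> 'a poly \<times> 'a poly \<times> 'a poly \<Rightarrow> bool" where
  "partially_reduced h F = (case F of (A,B,C) \<Rightarrow>
     pabs B < pabs A \<and> pabs A \<le> pabs C
     \<and> (pabs A < pabs C \<longrightarrow> psgn A \<in> {1, h})
     \<and> (pabs A = pabs C \<longrightarrow> psgn A = 1)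
     \<and> (B \<noteq> 0 \<longrightarrow> psgn B \<in> Sset h))"

text \<open>The set F_s. Degree bounds deg a \<le> s/4 etc. are written as 4 * deg a \<le> s;
  for zero polynomials (degree 0 in Isabelle, -\<infinity> in the paper) these bounds hold in both readings.\<close>
definition Fs :: "'a::{field,finite} \<Rightarrow> nat \<Rightarrow> 'a bcf set" where
  "Fs h s = {(a,b,c,d). irred_form (a,b,c,d)
      \<and> disc (a,b,c,d) \<noteq> 0 \<and> degree (disc (a,b,c,d)) = s
      \<and> 4 * degree a \<le> s \<and> 4 * degree b \<le> s
      \<and> 2 * degree (a*d) \<le> s \<and> 2 * degree (b*c) \<le> s
      \<and> psgn a \<in> Sset h}"

definition Es_set :: "'a::{field,finite} \<Rightarrow> nat \<Rightarrow> 'a bcf set" where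
  "Es_set h s = {f \<in> Fs h s.
      (let \<Delta> = -3 * disc f in
        (imaginary \<Delta> \<or> unusual \<Delta>) \<and> psgn \<Delta> \<in> {1, h})
      \<and> partially_reduced h (hessian f)
      \<and> (case hessian f of (P,Q,R) \<Rightarrow> degree P = degree R)}"

definition Es :: "'a::{field,finite} \<Rightarrow> nat \<Rightarrow> nat" where
  "Es h s = card (Es_set h s)"

end

theory Submission
  imports Defs
begin

(* Let f = (a,b,c,d) be counted by E_s with Hessian (P,Q,R), m = deg P = deg R.  Partial
   reduction makes P monic and deg Q < m, so the discriminant -3D(f) = Q^2 - 4PR has degree
   2m and sign -4 sgn(R); not being imaginary, it is unusual and its sign is h.  Thus s = 2m,
   and the degree bounds defining F_s together with P = b^2 - 3ac, R = c^2 - 3bd force m = 2k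
   and deg a, deg b, deg c, deg d \<le> k.  In particular E_s = 0 unless s = 4k.  Comparing
   t^(2k)-coefficients, the t^k-coefficients (A,B,C,D) satisfy Hessian(A,B,C,D) = (1,0,-h/4),
   so (A,B) lies on a conic with at most q+1 points and (C,D) is determined by (A,B).  A form
   is therefore determined by (A,B) and the parts of a, b, c, d below t^k, giving at most
   (q+1) q^(4k) possibilities; replacing a by -a gives disjoint images because sgn(a) \<in> S
   forces -sgn(a) \<notin> S, which yields the factor 1/2. *)

(* The characteristic of a finite ring divides its cardinality: translating every element
   by 1 permutes the ring, so summing over it shows CARD \<cdot> 1 = 0. *)
lemma of_nat_card_eq_0: "of_nat CARD('a::{finite,comm_ring_1}) = (0::'a)"
proof -
  have "(\<Sum>x\<in>UNIV. x + 1) = (\<Sum>x\<in>(UNIV::'a set). x)"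
    by (rule sum.reindex_bij_witness[where i="\<lambda>x. x - 1" and j="\<lambda>x. x + 1"]) auto
  then show ?thesis by (simp add: sum.distrib)
qed

lemma of_nat_nonzero_if_coprime_card:
  assumes "coprime CARD('a::{finite,field}) n"
  shows "(of_nat n :: 'a) \<noteq> 0"
proof
  assume "(of_nat n :: 'a) = 0"
  then have "CHAR('a) dvd n" by (simp add: of_nat_eq_0_iff_char_dvd)
  moreover have "CHAR('a) dvd CARD('a)" by (simp add: of_nat_card_eq_0 flip: of_nat_eq_0_iff_char_dvd)
  ultimately have "is_unit CHAR('a)" using assms coprime_common_divisor by blast
  then show False by simp
qed

lemma small_numerals_nonzero:
  assumes "coprime CARD('a::{finite,field}) 6"
  shows "(2::'a) \<noteq> 0" "(3::'a) \<noteq> 0" "(4::'a) \<noteq> 0" "(9::'a) \<noteq> 0"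
proof -
  have "(of_nat n :: 'a) \<noteq> 0" if "n dvd 6^2" for n
  proof (rule of_nat_nonzero_if_coprime_card)
    show "coprime CARD('a) n"
      using assms that by (meson coprime_divisors coprime_power_right_iff dvd_refl)
  qed
  from this[of 2] this[of 3] this[of 4] this[of 9]
  show "(2::'a) \<noteq> 0" "(3::'a) \<noteq> 0" "(4::'a) \<noteq> 0" "(9::'a) \<noteq> 0"
    by simp_all
qed

lemma disc_hessian_identity:
  fixes f :: "'a::comm_ring_1 \<times> 'a \<times> 'a \<times> 'a"
  assumes "hessian f = (P,Q,R)"
  shows "-3 * disc f = Q^2 - 4*P*R"
proof (cases f)
  case (fields a b c d)
  with assms have PQR: "P = b^2 - 3*a*c" "Q = b*c - 9*a*d" "R = c^2 - 3*b*d"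
    by (simp_all add: hessian_def)
  show ?thesis
    unfolding fields PQR disc_def by (simp add: algebra_simps power2_eq_square power3_eq_cube)
qed

lemma degree_times_neg3:
  fixes p :: "'a::field poly"
  assumes "(3::'a) \<noteq> 0"
  shows "degree (-3 * p) = degree p"
proof -
  have "-3 * p = smult (-3) p" by (metis mult_minus_left numeral_mult_conv_smult smult_minus_left)
  then show ?thesis using assms by simp
qed

(* If deg p, deg q \<le> k, the coefficient of t^(2k) in pq is the product of the
   coefficients of t^k: it is the only contributing pair. *)
lemma coeff_mult_middle:
  fixes p q :: "'a::comm_ring_1 poly"
  assumes "degree p \<le> k" "degree q \<le> k"
  shows "coeff (p*q) (2*k) = coeff p k * coeff q k"
proof -
  have "coeff (p*q) (2*k) = (\<Sum>i\<le>2*k. coeff p i * coeff q (2*k-i))" by (rule coeff_mult)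
  also have "\<dots> = (\<Sum>i\<le>2*k. if i = k then coeff p k * coeff q k else 0)"
  proof (rule sum.cong)
    fix i assume "i \<in> {..2*k}"
    then have "i \<noteq> k \<Longrightarrow> k < i \<or> k < 2*k - i" by auto
    then show "coeff p i * coeff q (2*k - i) = (if i = k then coeff p k * coeff q k else 0)"
      using assms by (auto simp: coeff_eq_0 mult_2)
  qed simp
  finally show ?thesis by simp
qed

lemma hessian_middle_coeffs:
  fixes a b c d :: "'a::comm_ring_1 poly"
  assumes "hessian (a,b,c,d) = (P,Q,R)"
    and "degree a \<le> k" "degree b \<le> k" "degree c \<le> k" "degree d \<le> k"
  shows "hessian (coeff a k, coeff b k, coeff c k, coeff d k) = (coeff P (2*k), coeff Q (2*k), coeff R (2*k))"
  using assms
  by (auto simp: hessian_def numeral_mult_conv_smult power2_eq_square coeff_mult_middle mult.assoc)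

lemma partially_reduced_same_degree:
  fixes h :: "'a::{field,finite}"
  assumes red: "partially_reduced h (P,Q,R)" and PR: "degree P = degree R"
  shows "P \<noteq> 0" "R \<noteq> 0" "lead_coeff P = 1" "Q = 0 \<or> degree Q < degree P"
proof -
  from red have QP: "pabs Q < pabs P" and PR_abs: "pabs P \<le> pabs R"
    and sgnP: "pabs P = pabs R \<longrightarrow> psgn P = 1"
    by (auto simp: partially_reduced_def)
  show P0: "P \<noteq> 0" using QP by (auto simp: pabs_def)
  show R0: "R \<noteq> 0" using PR_abs P0 by (auto simp: pabs_def split: if_splits)
  show "lead_coeff P = 1" using sgnP P0 R0 PR by (simp add: pabs_def psgn_def)
  have "1 < CARD('a)"
    using card_mono[of "UNIV::'a set" "{0,1}"] by simp
  then show "Q = 0 \<or> degree Q < degree P"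
    using QP P0 power_less_imp_less_exp by (auto simp: pabs_def split: if_splits)
qed

(* In that situation -4PR dominates Q^2: the discriminant Q^2 - 4PR has degree 2 deg P
   and leading coefficient -4 sgn(R). *)
lemma degree_Q2_minus_4PR:
  fixes P Q R :: "'a::field poly"
  assumes four: "(4::'a) \<noteq> 0" and lcP: "lead_coeff P = 1" and R0: "R \<noteq> 0"
    and PR: "degree P = degree R" and Q: "Q = 0 \<or> degree Q < degree P"
  shows "degree (Q^2 - 4*P*R) = 2 * degree P" "lead_coeff (Q^2 - 4*P*R) = -4 * lead_coeff R"
proof -
  have P0: "P \<noteq> 0" using lcP by auto
  have PR4: "4*P*R = smult 4 (P*R)" by (simp add: numeral_mult_conv_smult)
  have deg4PR: "degree (4*P*R) = 2 * degree P"
    using four P0 R0 PR by (simp add: PR4 degree_mult_eq)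
  have lc4PR: "lead_coeff (-(4*P*R)) = -4 * lead_coeff R"
    using lcP by (simp add: PR4 lead_coeff_mult)
  have small: "degree (Q^2) < degree (-(4*P*R))" if "Q \<noteq> 0"
    using Q that by (simp add: deg4PR degree_power_eq)
  have "degree (Q^2 - 4*P*R) = degree (-(4*P*R))
        \<and> lead_coeff (Q^2 - 4*P*R) = lead_coeff (-(4*P*R))"
  proof (cases "Q = 0")
    case False
    then show ?thesis
      using small degree_add_eq_right lead_coeff_add_le by (metis diff_conv_add_uminus)
  qed simp
  then have deg: "degree (Q^2 - 4*P*R) = degree (-(4*P*R))"
    and lc: "lead_coeff (Q^2 - 4*P*R) = lead_coeff (-(4*P*R))" by blast+
  show "degree (Q^2 - 4*P*R) = 2 * degree P" using deg deg4PR by simp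
  show "lead_coeff (Q^2 - 4*P*R) = -4 * lead_coeff R" using trans[OF lc lc4PR] .
qed

lemma hessian_degree_inequalities:
  fixes a b c d :: "'a::field poly"
  assumes three: "(3::'a) \<noteq> 0" and a0: "a \<noteq> 0" and H: "hessian (a,b,c,d) = (P,Q,R)"
    and dP: "degree P = m" and dR: "degree R = m"
    and da: "2 * degree a \<le> m" and db: "2 * degree b \<le> m"
    and dad: "degree (a*d) \<le> m" and dbc: "degree (b*c) \<le> m"
  shows "m \<le> max (2 * degree b) (degree a + degree c)"
    and "2 * degree c \<le> max m (degree b + degree d)"
    and "degree a + degree d \<le> m"
    and "b \<noteq> 0 \<Longrightarrow> degree b + degree c \<le> m"
    and "2 * degree c \<le> m \<Longrightarrow> d \<noteq> 0 \<Longrightarrow> b \<noteq> 0 \<Longrightarrow> degree b + degree d \<le> m"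
proof -
  have P: "P = b^2 - 3*a*c" and R: "R = c^2 - 3*b*d" using H by (simp_all add: hessian_def)
  have d3: "degree (3*x*y) \<le> degree x + degree y" for x y :: "'a poly"
    by (metis add_0 degree_mult_le degree_numeral order_trans add_le_mono1)
  show "m \<le> max (2 * degree b) (degree a + degree c)"
    using degree_diff_le_max[of "b^2" "3*a*c"] degree_power_le[of b 2] d3[of a c]
    unfolding P dP[symmetric] by linarith
  have "2 * degree c \<le> degree (c^2)" by (cases "c = 0") (simp_all add: degree_power_eq)
  also have "\<dots> = degree (R + 3*b*d)" using R by simp
  also have "\<dots> \<le> max m (degree b + degree d)"
    using order_trans[OF degree_add_le_max max.mono[OF _ d3]] dR by simp
  finally show "2 * degree c \<le> max m (degree b + degree d)" .
  show "degree a + degree d \<le> m"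
    using dad da a0 by (cases "d = 0") (auto simp: degree_mult_eq)
  show "b \<noteq> 0 \<Longrightarrow> degree b + degree c \<le> m"
    using dbc db by (cases "c = 0") (auto simp: degree_mult_eq)
  assume dc: "2 * degree c \<le> m" and d0: "d \<noteq> 0" and b0: "b \<noteq> 0"
  have "degree (b*d) = degree (smult 3 (b*d))" using three by simp
  also have "\<dots> = degree (c^2 - R)" using R by (simp add: numeral_mult_conv_smult mult.assoc)
  also have "\<dots> \<le> m"
    by (rule degree_diff_le) (use degree_power_le[of c 2] dc dR in auto)
  finally show "degree b + degree d \<le> m" using b0 d0 by (simp add: degree_mult_eq)
qed

lemma hessian_degree_bounds:
  fixes a b c d :: "'a::field poly"
  assumes "(3::'a) \<noteq> 0" and "a \<noteq> 0" and "hessian (a,b,c,d) = (P,Q,R)"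
    and "degree P = m" and "degree R = m"
    and da: "2 * degree a \<le> m" and db: "2 * degree b \<le> m"
    and "degree (a*d) \<le> m" and "degree (b*c) \<le> m"
  shows "even m" "2 * degree c \<le> m" "2 * degree d \<le> m"
proof -
  note ineq = hessian_degree_inequalities[OF assms, unfolded le_max_iff_disj]
  show dc: "2 * degree c \<le> m"
  proof (cases "b = 0")
    case True
    then show ?thesis using ineq(2,3) da by auto
  next
    case False
    then show ?thesis using ineq(1-3) ineq(4)[OF False] da db by linarith
  qed
  show "even m"
    using ineq(1) da db dc by presburger
  show "2 * degree d \<le> m"
  proof (cases "d = 0 \<or> b = 0")
    case True
    then show ?thesis using ineq(1,3) da dc by auto
  next
    case False
    then show ?thesis using ineq(1,3) ineq(5)[OF dc] da db dc by auto
  qed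
qed

definition top_coeffs :: "nat \<Rightarrow> 'a::zero bcf \<Rightarrow> 'a \<times> 'a \<times> 'a \<times> 'a" where
  "top_coeffs k f = (case f of (a,b,c,d) \<Rightarrow> (coeff a k, coeff b k, coeff c k, coeff d k))"

(* A discriminant of even degree is not imaginary; being unusual, its sign is a
   non-square, so of the two allowed signs 1 and h it must be h. *)
lemma even_degree_sign:
  fixes \<Delta> :: "'a::field poly"
  assumes "even (degree \<Delta>)" and "imaginary \<Delta> \<or> unusual \<Delta>" and "psgn \<Delta> \<in> {1, h}"
  shows "psgn \<Delta> = h"
proof -
  have "is_square (1::'a)" unfolding is_square_def by (rule exI[of _ 1]) simp
  then show ?thesis using assms by (auto simp: imaginary_def unusual_def)
qed

lemma Es_set_top_coeffs:
  fixes h :: "'a::{field,finite}"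
  assumes q6: "coprime CARD('a) 6" and f: "(a,b,c,d) \<in> Es_set h s"
  obtains k where "s = 4*k" "degree a \<le> k" "degree b \<le> k" "degree c \<le> k" "degree d \<le> k"
    and "hessian (top_coeffs k (a,b,c,d)) = (1, 0, -h/4)"
proof -
  note nz = small_numerals_nonzero[OF q6]
  obtain P Q R where H: "hessian (a,b,c,d) = (P,Q,R)" by (metis prod_cases3)
  define \<Delta> where "\<Delta> = -3 * disc (a,b,c,d)"
  from f have a0: "a \<noteq> 0" and ds: "degree (disc (a,b,c,d)) = s"
    and da: "4 * degree a \<le> s" and db: "4 * degree b \<le> s"
    and dad: "2 * degree (a*d) \<le> s" and dbc: "2 * degree (b*c) \<le> s"
    and sign: "(imaginary \<Delta> \<or> unusual \<Delta>) \<and> psgn \<Delta> \<in> {1, h}"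
    and red: "partially_reduced h (P,Q,R)" and PR: "degree P = degree R"
    by (auto simp: Es_set_def Fs_def irred_form_def H Let_def \<Delta>_def)
  note shape = partially_reduced_same_degree[OF red PR]
  define m where "m = degree P"
  have \<Delta>: "\<Delta> = Q^2 - 4*P*R" unfolding \<Delta>_def by (rule disc_hessian_identity[OF H])
  have "degree \<Delta> = s" unfolding \<Delta>_def using degree_times_neg3[OF nz(2)] ds by simp
  then have sm: "s = 2*m"
    using degree_Q2_minus_4PR(1)[OF nz(3) shape(3,2) PR shape(4)] by (simp add: \<Delta> m_def)
  have "psgn \<Delta> = h"
    by (rule even_degree_sign) (use sign sm \<open>degree \<Delta> = s\<close> in auto)
  then have lcR: "lead_coeff R = -h/4"
    using degree_Q2_minus_4PR(2)[OF nz(3) shape(3,2) PR shape(4)] nz(3)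
    by (simp add: \<Delta> psgn_def field_simps)
  have "even m \<and> 2 * degree c \<le> m \<and> 2 * degree d \<le> m"
    using hessian_degree_bounds[OF nz(2) a0 H m_def[symmetric] PR[folded m_def, symmetric]]
      da db dad dbc sm by simp
  then obtain k where mk: "m = 2*k" and dc: "degree c \<le> k" and dd: "degree d \<le> k"
    by (auto elim!: evenE)
  have top: "(coeff P (2*k), coeff Q (2*k), coeff R (2*k)) = (1, 0, -h/4)"
    using shape(3,4) lcR mk PR by (auto simp: m_def coeff_eq_0)
  show ?thesis
  proof (rule that)
    show "s = 4*k" "degree a \<le> k" "degree b \<le> k" "degree c \<le> k" "degree d \<le> k"
      using sm mk da db dc dd by auto
    then show "hessian (top_coeffs k (a,b,c,d)) = (1, 0, -h/4)"
      using hessian_middle_coeffs[OF H] top by (simp add: top_coeffs_def)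
  qed
qed

lemma hessian_unit_top_equations:
  fixes A B C D R :: "'a::comm_ring_1"
  assumes "hessian (A,B,C,D) = (1, 0, R)"
  shows "B^2 = 1 + 3*A*C" "B*C = 9*A*D" "C^2 = R + 3*B*D"
  using assms by (simp_all add: hessian_def diff_eq_eq)

lemma hessian_unit_top:
  fixes A B C D R :: "'a::comm_ring_1"
  assumes H: "hessian (A,B,C,D) = (1, 0, R)"
  shows "C = -3*A*R" "B^2 = 1 - 9*R*A^2"
proof -
  note E = hessian_unit_top_equations[OF H]
  have "C = C * (B^2 - 3*A*C)" using E(1) by simp
  also have "\<dots> = B*(B*C) - 3*A*C^2" by (simp add: algebra_simps power2_eq_square)
  also have "\<dots> = -3*A*R" unfolding E(2,3) by (simp add: algebra_simps)
  finally show C: "C = -3*A*R" .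
  show "B^2 = 1 - 9*R*A^2" unfolding E(1) C by (simp add: algebra_simps power2_eq_square)
qed

lemma hessian_unit_top_unique:
  fixes A B C D C' D' R :: "'a::field"
  assumes three: "(3::'a) \<noteq> 0"
    and H: "hessian (A,B,C,D) = (1, 0, R)" and H': "hessian (A,B,C',D') = (1, 0, R)"
  shows "C = C'" "D = D'"
proof -
  note E = hessian_unit_top_equations[OF H] and E' = hessian_unit_top_equations[OF H']
  show C: "C = C'" using hessian_unit_top(1)[OF H] hessian_unit_top(1)[OF H'] by simp
  show "D = D'"
  proof (cases "A = 0")
    case False
    have "(9::'a) = 3*3" by simp
    with three False have "9*A \<noteq> 0" by (metis mult_eq_0_iff)
    then show ?thesis using E(2) E'(2) C by simp
  next
    case True
    then have "3*B \<noteq> 0" using E(1) three by auto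
    then show ?thesis using E(3) E'(3) C by simp
  qed
qed

definition polys_below :: "nat \<Rightarrow> 'a::zero poly set" where
  "polys_below k = {p. \<forall>i\<ge>k. coeff p i = 0}"

definition drop_coeff :: "nat \<Rightarrow> 'a::ab_group_add poly \<Rightarrow> 'a poly" where
  "drop_coeff k p = p - monom (coeff p k) k"

lemma drop_coeff_decomp: "p = drop_coeff k p + monom (coeff p k) k"
  by (simp add: drop_coeff_def)

lemma drop_coeff_in_polys_below: "degree p \<le> k \<Longrightarrow> drop_coeff k p \<in> polys_below k"
  by (auto simp: polys_below_def drop_coeff_def coeff_monom coeff_eq_0)

lemma polys_below_uminus: "p \<in> polys_below k \<Longrightarrow> -p \<in> polys_below k"
  by (simp add: polys_below_def)

lemma polys_below_eq_image: "polys_below k = Poly ` {xs :: 'a::zero list. length xs = k}"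
proof (intro equalityI subsetI)
  fix p :: "'a poly" assume p: "p \<in> polys_below k"
  have "p = Poly (map (coeff p) [0..<k])"
    using p by (intro poly_eqI) (auto simp: polys_below_def nth_default_def)
  then show "p \<in> Poly ` {xs. length xs = k}" by force
next
  fix p :: "'a poly" assume "p \<in> Poly ` {xs. length xs = k}"
  then show "p \<in> polys_below k" by (auto simp: polys_below_def nth_default_def)
qed

lemma card_polys_below: "card (polys_below k :: 'a::{zero,finite} poly set) \<le> CARD('a) ^ k"
    and finite_polys_below: "finite (polys_below k :: 'a::{zero,finite} poly set)"
proof -
  have fin: "finite {xs::'a list. length xs = k}"
    using finite_lists_length_eq[of "UNIV::'a set" k] by simp
  show "finite (polys_below k :: 'a poly set)" unfolding polys_below_eq_image using fin by simp
  have "card (polys_below k :: 'a poly set) \<le> card {xs::'a list. length xs = k}"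
    unfolding polys_below_eq_image using fin by (rule card_image_le)
  also have "\<dots> = CARD('a) ^ k" using card_lists_length_eq[of "UNIV::'a set" k] by simp
  finally show "card (polys_below k :: 'a poly set) \<le> CARD('a) ^ k" .
qed

(* The affine conic B^2 = 1 + cA^2 (c \<noteq> 0) has at most q + 1 points: away from (0,1)
   a point is determined by the slope A/(B-1) of the line joining it to (0,1). *)
lemma conic_card_le:
  fixes c :: "'a::{field,finite}"
  assumes c0: "c \<noteq> 0" and two: "(2::'a) \<noteq> 0"
  shows "card {(A,B). B^2 = 1 + c*A^2} \<le> CARD('a) + 1"
proof -
  define X where "X = {(A::'a,B). B^2 = 1 + c*A^2} - {(0,1)}"
  define slope where "slope = (\<lambda>(A::'a,B). A / (B - 1))"
  define g where "g = (\<lambda>t::'a. (c*t^2 + 1) / (c*t^2 - 1))"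
  have recover: "B = g (slope (A,B)) \<and> A = slope (A,B) * (B - 1)" if "(A,B) \<in> X" for A B
  proof -
    define t where "t = slope (A,B)"
    have B1: "B - 1 \<noteq> 0" using that c0 by (auto simp: X_def)
    have At: "A = t * (B - 1)" using B1 by (simp add: t_def slope_def)
    have "(B - 1) * (B + 1) = (B - 1) * (c*t^2*(B - 1))"
      using that by (simp add: X_def At algebra_simps power2_eq_square)
    then have Bt1: "c*t^2*(B - 1) = B + 1" using B1 by (metis mult_left_cancel)
    have "B * (c*t^2 - 1) = c*t^2*(B - 1) + c*t^2 - B" by (simp add: algebra_simps)
    also have "\<dots> = c*t^2 + 1" unfolding Bt1 by (simp add: algebra_simps)
    finally have Bt: "B * (c*t^2 - 1) = c*t^2 + 1" .
    have "c*t^2 - 1 \<noteq> 0"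
    proof
      assume "c*t^2 - 1 = 0"
      then have "c*t^2 + 1 = 2" and "c*t^2 + 1 = 0" using Bt by simp_all
      with two show False by simp
    qed
    then have "B = g t" unfolding g_def using Bt by (simp add: eq_divide_eq)
    then show ?thesis using At unfolding t_def[symmetric] by simp
  qed
  have "inj_on slope X"
  proof (rule inj_onI, clarify)
    fix A B A' B' assume AB: "(A,B) \<in> X" and AB': "(A',B') \<in> X"
      and "slope (A,B) = slope (A',B')"
    then obtain t where t: "slope (A,B) = t" "slope (A',B') = t" by blast
    show "A = A' \<and> B = B'"
      using recover[OF AB, unfolded t(1)] recover[OF AB', unfolded t(2)] by auto
  qed
  then have "card X \<le> CARD('a)" by (rule card_inj_on_le) auto
  moreover have "card (insert (0,1) X) \<le> card X + 1" by (simp add: card_insert_if)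
  moreover have "{(A,B). B^2 = 1 + c*A^2} \<subseteq> insert (0,1) X" by (auto simp: X_def)
  ultimately show ?thesis by (meson card_mono finite add_right_mono order_trans)
qed

lemma generator_order_ge:
  fixes h :: "'a::{field,finite}"
  assumes gen: "\<forall>x::'a. x \<noteq> 0 \<longrightarrow> (\<exists>i. x = h^i)" and hn: "h^n = 1" and n0: "0 < n"
  shows "CARD('a) - 1 \<le> n"
proof -
  have "UNIV - {0} \<subseteq> (\<lambda>i. h^i) ` {..<n}"
  proof
    fix x :: 'a assume "x \<in> UNIV - {0}"
    then obtain i where "x = h^i" using gen by auto
    also have "\<dots> = h^(n * (i div n) + i mod n)" by simp
    also have "\<dots> = (h^n)^(i div n) * h^(i mod n)" by (simp only: power_add power_mult)
    finally have "x = h^(i mod n)" using hn by simp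
    then show "x \<in> (\<lambda>i. h^i) ` {..<n}" using n0 by auto
  qed
  then have "card (UNIV - {0::'a}) \<le> card ((\<lambda>i. h^i) ` {..<n})" by (intro card_mono) auto
  also have "\<dots> \<le> n" using card_image_le[of "{..<n}" "\<lambda>i. h^i"] by simp
  finally show ?thesis by (simp add: card_Diff_singleton)
qed

lemma generator_powers_inj:
  fixes h :: "'a::{field,finite}"
  assumes gen: "\<forall>x::'a. x \<noteq> 0 \<longrightarrow> (\<exists>i. x = h^i)" and h0: "h \<noteq> 0"
    and "i < CARD('a) - 1" "j < CARD('a) - 1" and "h^i = h^j"
  shows "i = j"
proof -
  have "\<not> i < j" if "i < CARD('a) - 1" "j < CARD('a) - 1" "h^i = h^j" for i j
  proof
    assume ij: "i < j"
    then have "h^i * h^(j-i) = h^i * 1"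
      using that(3) by (metis le_add_diff_inverse less_imp_le mult_1_right power_add)
    then have "h^(j-i) = 1" using h0 by simp
    then show False using generator_order_ge[OF gen] ij that(2) by fastforce
  qed
  then show ?thesis using assms(3-5) by (metis linorder_neqE_nat)
qed

(* The set S = {h^i : i \<le> (q-3)/2} contains no pair x, -x: otherwise h^(2i) = x^2 = h^(2j)
   with 2i, 2j < q - 1, forcing x = -x. *)
lemma Sset_no_negatives:
  fixes h :: "'a::{field,finite}"
  assumes gen: "\<forall>x::'a. x \<noteq> 0 \<longrightarrow> (\<exists>i. x = h^i)" and h0: "h \<noteq> 0" and two: "(2::'a) \<noteq> 0"
    and x: "x \<in> Sset h"
  shows "-x \<notin> Sset h"
proof
  assume "-x \<in> Sset h"
  then obtain j where j: "-x = h^j" "2*j \<le> CARD('a) - 3" by (auto simp: Sset_def)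
  obtain i where i: "x = h^i" "2*i \<le> CARD('a) - 3" using x by (auto simp: Sset_def)
  have "2 \<le> CARD('a)" using card_mono[of "UNIV::'a set" "{0,1}"] by simp
  then have small: "2*i < CARD('a) - 1" "2*j < CARD('a) - 1" using i(2) j(2) by linarith+
  have "h^(2*i) = h^(2*j)" by (metis i(1) j(1) power2_minus power_even_eq)
  then have "i = j" using generator_powers_inj[OF gen h0 small] by simp
  then have "2 * x = 0" using i(1) j(1) by simp
  then show False using two i(1) h0 by simp
qed

lemma card_with_disjoint_image:
  assumes "finite V" "X \<subseteq> V" "g ` X \<subseteq> V" "inj_on g X" "X \<inter> g ` X = {}"
  shows "2 * card X \<le> card V"
proof -
  have "card X + card (g ` X) = card (X \<union> g ` X)"
    using assms by (metis card_Un_disjoint finite_subset)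
  also have "\<dots> \<le> card V" using assms by (intro card_mono) auto
  finally show ?thesis using card_image[OF assms(4)] by simp
qed

(* The data from which a counted form is recovered: the t^k-coefficients of a and b, and
   the remaining parts of a, b, c, d. *)
definition leading_shape ::
    "nat \<Rightarrow> 'a::ab_group_add bcf \<Rightarrow> ('a \<times> 'a) \<times> 'a poly \<times> 'a poly \<times> 'a poly \<times> 'a poly" where
  "leading_shape k f = (case f of (a,b,c,d) \<Rightarrow>
     ((coeff a k, coeff b k), drop_coeff k a, drop_coeff k b, drop_coeff k c, drop_coeff k d))"

definition negate_shape ::
    "('a::ab_group_add \<times> 'a) \<times> 'a poly \<times> 'a poly \<times> 'a poly \<times> 'a poly
       \<Rightarrow> ('a \<times> 'a) \<times> 'a poly \<times> 'a poly \<times> 'a poly \<times> 'a poly" where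
  "negate_shape = (\<lambda>((A,B),t,x,y,z). ((-A,B),-t,x,y,z))"

(* Among forms whose t^k-coefficients have Hessian (1,0,R), the shape determines the form,
   since the t^k-coefficients of c and d are determined by those of a and b. *)
lemma leading_shape_inj_on:
  fixes R :: "'a::field"
  assumes three: "(3::'a) \<noteq> 0"
  shows "inj_on (leading_shape k) {f. hessian (top_coeffs k f) = (1, 0, R)}"
proof (rule inj_onI)
  fix f g assume "f \<in> {f. hessian (top_coeffs k f) = (1, 0, R)}"
    and "g \<in> {f. hessian (top_coeffs k f) = (1, 0, R)}"
    and "leading_shape k f = leading_shape k g"
  moreover obtain a b c d a' b' c' d' where fg: "f = (a,b,c,d)" "g = (a',b',c',d')"
    by (metis prod_cases4)
  ultimately have H: "hessian (coeff a k, coeff b k, coeff c k, coeff d k) = (1, 0, R)"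
    and H': "hessian (coeff a k, coeff b k, coeff c' k, coeff d' k) = (1, 0, R)"
    and parts: "coeff a k = coeff a' k" "coeff b k = coeff b' k"
      "drop_coeff k a = drop_coeff k a'" "drop_coeff k b = drop_coeff k b'"
      "drop_coeff k c = drop_coeff k c'" "drop_coeff k d = drop_coeff k d'"
    by (auto simp: top_coeffs_def leading_shape_def)
  note top = hessian_unit_top_unique[OF three H H']
  have "a = a'" "b = b'" "c = c'" "d = d'"
    using parts top drop_coeff_decomp by metis+
  then show "f = g" using fg by simp
qed

lemma Es_set_member:
  fixes h :: "'a::{field,finite}"
  assumes q6: "coprime CARD('a) 6" and f: "(a,b,c,d) \<in> Es_set h (4*k)"
  shows "degree a \<le> k" "degree b \<le> k" "degree c \<le> k" "degree d \<le> k"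
    and "hessian (top_coeffs k (a,b,c,d)) = (1, 0, -h/4)" and "psgn a \<in> Sset h"
proof -
  obtain k' where "4*k = 4*k'" "degree a \<le> k'" "degree b \<le> k'" "degree c \<le> k'"
    "degree d \<le> k'" "hessian (top_coeffs k' (a,b,c,d)) = (1, 0, -h/4)"
    using Es_set_top_coeffs[OF q6 f] by blast
  then show "degree a \<le> k" "degree b \<le> k" "degree c \<le> k" "degree d \<le> k"
    and "hessian (top_coeffs k (a,b,c,d)) = (1, 0, -h/4)" by auto
  show "psgn a \<in> Sset h" using f by (simp add: Es_set_def Fs_def)
qed

definition shape_space ::
    "'a::{field,finite} \<Rightarrow> nat \<Rightarrow> (('a \<times> 'a) \<times> 'a poly \<times> 'a poly \<times> 'a poly \<times> 'a poly) set" where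
  "shape_space h k = {(A,B). B^2 = 1 + (9*h/4)*A^2}
     \<times> polys_below k \<times> polys_below k \<times> polys_below k \<times> polys_below k"

lemma card_shape_space:
  fixes h :: "'a::{field,finite}"
  assumes q6: "coprime CARD('a) 6" and h0: "h \<noteq> 0"
  shows "card (shape_space h k) \<le> (CARD('a) + 1) * CARD('a)^(4*k)"
proof -
  note nz = small_numerals_nonzero[OF q6]
  have "card (shape_space h k)
      \<le> (CARD('a) + 1) * (CARD('a)^k * (CARD('a)^k * (CARD('a)^k * CARD('a)^k)))"
    unfolding shape_space_def card_cartesian_product
    by (intro mult_le_mono conic_card_le card_polys_below) (use h0 nz in simp_all)
  also have "\<dots> = (CARD('a) + 1) * CARD('a)^(4*k)"
  proof -
    have "4*k = k + (k + (k + k))" by simp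
    then show ?thesis by (simp only: power_add)
  qed
  finally show ?thesis .
qed

(* Shapes of counted forms lie in the shape space, since the top coefficients (A,B) of a, b
   satisfy B^2 = 1 - 9(-h/4)A^2. *)
lemma leading_shape_in_space:
  fixes h :: "'a::{field,finite}"
  assumes q6: "coprime CARD('a) 6" and f: "(a,b,c,d) \<in> Es_set h (4*k)"
  shows "leading_shape k (a,b,c,d) \<in> shape_space h k"
proof -
  note data = Es_set_member[OF q6 f]
  have "(coeff b k)^2 = 1 - 9*(-h/4)*(coeff a k)^2"
    by (rule hessian_unit_top(2)[where C = "coeff c k" and D = "coeff d k"])
      (use data(5) in \<open>simp add: top_coeffs_def\<close>)
  then show ?thesis
    using data(1-4) by (simp add: shape_space_def leading_shape_def drop_coeff_in_polys_below)
qed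

lemma negate_shape_in_space: "x \<in> shape_space h k \<Longrightarrow> negate_shape x \<in> shape_space h k"
  by (auto simp: shape_space_def negate_shape_def polys_below_uminus)

(* No counted form has the negated shape of another: that would force a = -a', but the
   leading coefficients of a and a' both lie in S. *)
lemma leading_shape_neq_negated:
  fixes h :: "'a::{field,finite}"
  assumes q6: "coprime CARD('a) 6" and h0: "h \<noteq> 0"
    and gen: "\<forall>x::'a. x \<noteq> 0 \<longrightarrow> (\<exists>i. x = h^i)"
    and f: "(a,b,c,d) \<in> Es_set h (4*k)" and g: "(a',b',c',d') \<in> Es_set h (4*k)"
  shows "leading_shape k (a,b,c,d) \<noteq> negate_shape (leading_shape k (a',b',c',d'))"
proof
  assume "leading_shape k (a,b,c,d) = negate_shape (leading_shape k (a',b',c',d'))"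
  then have "coeff a k = - coeff a' k" "drop_coeff k a = - drop_coeff k a'"
    by (simp_all add: leading_shape_def negate_shape_def)
  then have "a = - a'" by (metis drop_coeff_decomp minus_add_distrib minus_monom)
  then have "psgn a = - psgn a'" by (simp add: psgn_def)
  then show False
    using Sset_no_negatives[OF gen h0 small_numerals_nonzero(1)[OF q6]]
      Es_set_member(6)[OF q6 f] Es_set_member(6)[OF q6 g] by simp
qed

(* The counting bound: the shape map is injective on counted forms, and the shapes and their
   negations form disjoint subsets of the shape space. *)
lemma Es_set_card_bound:
  fixes h :: "'a::{field,finite}"
  assumes q6: "coprime CARD('a) 6" and h0: "h \<noteq> 0"
    and gen: "\<forall>x::'a. x \<noteq> 0 \<longrightarrow> (\<exists>i. x = h^i)"
  shows "2 * card (Es_set h (4*k)) \<le> (CARD('a) + 1) * CARD('a)^(4*k)"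
proof -
  define E where "E = Es_set h (4*k)"
  define S where "S = leading_shape k ` E"
  have "inj_on (leading_shape k) E"
    by (rule inj_on_subset[OF leading_shape_inj_on[OF small_numerals_nonzero(2)[OF q6]]])
      (use Es_set_member(5)[OF q6] in \<open>fastforce simp: E_def\<close>)
  then have "2 * card E = 2 * card S" by (simp add: S_def card_image)
  also have "\<dots> \<le> card (shape_space h k)"
  proof (rule card_with_disjoint_image)
    show "finite (shape_space h k)"
      by (simp add: shape_space_def finite_polys_below)
    show S_in: "S \<subseteq> shape_space h k"
      using leading_shape_in_space[OF q6] by (fastforce simp: S_def E_def)
    show "negate_shape ` S \<subseteq> shape_space h k"
      using S_in negate_shape_in_space by blast
    show "inj_on negate_shape S"
      by (rule inj_onI) (auto simp: negate_shape_def)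
    show "S \<inter> negate_shape ` S = {}"
      using leading_shape_neq_negated[OF q6 h0 gen] by (fastforce simp: S_def E_def)
  qed
  also have "\<dots> \<le> (CARD('a) + 1) * CARD('a)^(4*k)" by (rule card_shape_space[OF q6 h0])
  finally show ?thesis by (simp add: E_def)
qed

theorem mainTheorem15:
  fixes h :: "'a::{field,finite}" and s :: nat
  assumes "coprime (CARD('a)) 6"
    and "h \<noteq> 0" and "\<forall>x::'a. x \<noteq> 0 \<longrightarrow> (\<exists>i. x = h ^ i)"
  shows "(s mod 4 = 0 \<longrightarrow> real (Es h s) \<le> (real CARD('a) + 1) / 2 * real CARD('a) ^ s)
       \<and> (s mod 4 \<noteq> 0 \<longrightarrow> Es h s = 0)"
proof (intro conjI impI)
  assume "s mod 4 = 0"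
  then obtain k where s: "s = 4*k" by auto
  have "real (2 * Es h s) \<le> real ((CARD('a) + 1) * CARD('a)^s)"
    unfolding Es_def of_nat_le_iff s by (rule Es_set_card_bound[OF assms])
  then show "real (Es h s) \<le> (real CARD('a) + 1) / 2 * real CARD('a) ^ s"
    by (simp add: algebra_simps)
next
  assume s4: "s mod 4 \<noteq> 0"
  have "Es_set h s = {}"
  proof (rule equals0I)
    fix f assume "f \<in> Es_set h s"
    then obtain a b c d where f: "(a,b,c,d) \<in> Es_set h s" by (metis prod_cases4)
    obtain k where "s = 4*k" using Es_set_top_coeffs[OF assms(1) f] by metis
    then show False using s4 by simp
  qed
  then show "Es h s = 0" by (simp add: Es_def)
qed

end
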